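(* Let $g:[a,b]\to\mathbb R$ be left-continuous and increasing, with $g^C$ being $p$-$H$-Hölder on $[a,b]$ (i.e. $|g^C(x)-g^C(y)|\le H|x-y|^p$ for all $x,y$, with $H>0$, $p\in(0,1]$). Let $f:[a,b]\to\mathbb R$ be $g$-Lipschitz continuous with Lipschitz constant $H$. Then $$\Big|f(a)(g^C(b)-g^C(a))-\int_a^b f(s)\,\mathrm dg^C(s)\Big|\le H^2(b-a)^p(g(b)-g(a)),$$ $$\Big|\tfrac{f(a)+f(b)}{2}(g^C(b)-g^C(a))-\int_a^b f(s)\,\mathrm dg^C(s)\Big|\le H^2\Big(\tfrac{b-a}{2}\Big)^p(g(b)-g(a)),$$ where the integrals are Kurzweil–Stieltjes integrals.
   Context: $\Delta^+g(t)=g(t^+)-g(t)$; the jump part of $g$ is $g^B(t)=\sum_{s\in[a,t)}\Delta^+g(s)$ and its continuous part is $g^C=g-g^B$. $f$ is $g$-Lipschitz continuous with constant $H$ if $|f(t)-f(s)|\le H|g(t)-g(s)|$ for all $t,s\in[a,b]$. *)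

theory Defs
  imports "HOL-Analysis.Analysis"
begin

definition right_jump :: "(real \<Rightarrow> real) \<Rightarrow> real \<Rightarrow> real" where
  "right_jump g t = Lim (at_right t) g - g t"

definition jump_part :: "(real \<Rightarrow> real) \<Rightarrow> real \<Rightarrow> real \<Rightarrow> real" where
  "jump_part g a t = (\<Sum>\<^sub>\<infinity> s\<in>{a..<t}. right_jump g s)"

definition cont_part :: "(real \<Rightarrow> real) \<Rightarrow> real \<Rightarrow> real \<Rightarrow> real" where
  "cont_part g a t = g t - jump_part g a t"

definition has_ks_integral :: "(real \<Rightarrow> real) \<Rightarrow> (real \<Rightarrow> real) \<Rightarrow> real \<Rightarrow> real \<Rightarrow> real \<Rightarrow> bool" where
  "has_ks_integral f g I a b \<longleftrightarrow>
     (\<forall>e>0. \<exists>\<gamma>. gauge \<gamma> \<and>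
        (\<forall>D. D tagged_division_of {a..b} \<and> \<gamma> fine D \<longrightarrow>
           \<bar>(\<Sum>(t,K)\<in>D. f t * (g (Sup K) - g (Inf K))) - I\<bar> < e))"

definition ks_integrable :: "(real \<Rightarrow> real) \<Rightarrow> (real \<Rightarrow> real) \<Rightarrow> real \<Rightarrow> real \<Rightarrow> bool" where
  "ks_integrable f g a b \<longleftrightarrow> (\<exists>I. has_ks_integral f g I a b)"

definition ks_integral :: "(real \<Rightarrow> real) \<Rightarrow> (real \<Rightarrow> real) \<Rightarrow> real \<Rightarrow> real \<Rightarrow> real" where
  "ks_integral f g a b = (THE I. has_ks_integral f g I a b)"

end

theory Submission
  imports Defs
begin

text \<open>The continuous part \<open>g\<^sup>C\<close> is increasing, since the jumps of \<open>g\<close> in \<open>[s,t)\<close> add up to at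
  most \<open>g t - g s\<close>, and it is continuous, being H\<ouml>lder. For increasing \<open>u\<close> and continuous
  increasing \<open>G\<close>, every lower Darboux--Stieltjes sum lies below every upper one, and the two
  are close on fine divisions; hence \<open>u\<close> is Kurzweil--Stieltjes integrable with respect to \<open>G\<close>.
  As \<open>f\<close> is \<open>g\<close>-Lipschitz, \<open>f\<close> is the difference of the increasing functions \<open>H g + f\<close> and
  \<open>H g\<close>, so it is integrable. Finally
  \<open>|c (G b - G a) - \<integral>f dG| \<le> sup |c - f| (G b - G a)\<close>; for \<open>c = f a\<close> (resp.
  \<open>(f a + f b)/2\<close>) the \<open>g\<close>-Lipschitz bound gives \<open>sup |c - f| \<le> H (g b - g a)\<close> (resp. half of
  it), and the H\<ouml>lder bound gives \<open>G b - G a \<le> H (b - a)\<^sup>p\<close>.\<close>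

definition stieltjes_sum ::
    "(real \<Rightarrow> real) \<Rightarrow> (real \<Rightarrow> real) \<Rightarrow> (real \<times> real set) set \<Rightarrow> real" where
  "stieltjes_sum f G D = (\<Sum>(t,K)\<in>D. f t * (G (Sup K) - G (Inf K)))"

definition lower_stieltjes_sum ::
    "(real \<Rightarrow> real) \<Rightarrow> (real \<Rightarrow> real) \<Rightarrow> (real \<times> real set) set \<Rightarrow> real" where
  "lower_stieltjes_sum u G D = (\<Sum>(t,K)\<in>D. u (Inf K) * (G (Sup K) - G (Inf K)))"

definition upper_stieltjes_sum ::
    "(real \<Rightarrow> real) \<Rightarrow> (real \<Rightarrow> real) \<Rightarrow> (real \<times> real set) set \<Rightarrow> real" where
  "upper_stieltjes_sum u G D = (\<Sum>(t,K)\<in>D. u (Sup K) * (G (Sup K) - G (Inf K)))"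

lemma has_ks_integral_iff:
  "has_ks_integral f G I a b \<longleftrightarrow> (\<forall>e>0. \<exists>\<gamma>. gauge \<gamma> \<and>
      (\<forall>D. D tagged_division_of {a..b} \<and> \<gamma> fine D \<longrightarrow> \<bar>stieltjes_sum f G D - I\<bar> < e))"
  unfolding has_ks_integral_def stieltjes_sum_def by (rule refl)

lemma has_ks_integralE:
  assumes "has_ks_integral f G I a b" "e > 0"
  obtains \<gamma> where "gauge \<gamma>"
    "\<And>D. D tagged_division_of {a..b} \<Longrightarrow> \<gamma> fine D \<Longrightarrow> \<bar>stieltjes_sum f G D - I\<bar> < e"
  using assms(1)[unfolded has_ks_integral_iff, rule_format, OF assms(2)] that by meson

lemma tagged_division_of_real_intervalD:
  fixes a b :: real
  assumes "D tagged_division_of {a..b}" "(t,K) \<in> D"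
  shows "a \<le> Inf K" "Inf K \<le> t" "t \<le> Sup K" "Sup K \<le> b" "Inf K \<in> K" "Sup K \<in> K"
proof -
  obtain c d where K: "K = cbox c d" using tagged_division_ofD(4)[OF assms] by blast
  have tK: "t \<in> K" using tagged_division_ofD(2)[OF assms] .
  have sub: "K \<subseteq> {a..b}" using tagged_division_ofD(3)[OF assms] .
  from K tK have cd: "c \<le> d" "K = {c..d}" by auto
  then have "Inf K = c" "Sup K = d" by auto
  then show "a \<le> Inf K" "Inf K \<le> t" "t \<le> Sup K" "Sup K \<le> b" "Inf K \<in> K" "Sup K \<in> K"
    using cd sub tK by auto
qed

lemma stieltjes_sum_const:
  assumes "D tagged_division_of {a..b}" "a \<le> b"
  shows "stieltjes_sum (\<lambda>_. c) G D = c * (G b - G a)"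
  using additive_tagged_division_1[OF assms(2,1), of G]
  by (simp add: stieltjes_sum_def sum_distrib_left[symmetric] case_prod_unfold)

lemma stieltjes_sum_diff:
  "stieltjes_sum (\<lambda>x. f x - h x) G D = stieltjes_sum f G D - stieltjes_sum h G D"
  by (simp add: stieltjes_sum_def sum_subtractf[symmetric] case_prod_unfold left_diff_distrib)

lemma has_ks_integral_diff:
  assumes f: "has_ks_integral f G I a b" and h: "has_ks_integral h G J a b"
  shows "has_ks_integral (\<lambda>x. f x - h x) G (I - J) a b"
  unfolding has_ks_integral_iff
proof (intro allI impI)
  fix e :: real assume "e > 0"
  then have e2: "e / 2 > 0" by simp
  obtain \<gamma>f where \<gamma>f: "gauge \<gamma>f"
      "\<And>D. D tagged_division_of {a..b} \<Longrightarrow> \<gamma>f fine D \<Longrightarrow> \<bar>stieltjes_sum f G D - I\<bar> < e / 2"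
    using has_ks_integralE[OF f e2] by blast
  obtain \<gamma>h where \<gamma>h: "gauge \<gamma>h"
      "\<And>D. D tagged_division_of {a..b} \<Longrightarrow> \<gamma>h fine D \<Longrightarrow> \<bar>stieltjes_sum h G D - J\<bar> < e / 2"
    using has_ks_integralE[OF h e2] by blast
  show "\<exists>\<gamma>. gauge \<gamma> \<and> (\<forall>D. D tagged_division_of {a..b} \<and> \<gamma> fine D \<longrightarrow>
      \<bar>stieltjes_sum (\<lambda>x. f x - h x) G D - (I - J)\<bar> < e)"
  proof (intro exI conjI allI impI)
    show "gauge (\<lambda>x. \<gamma>f x \<inter> \<gamma>h x)" using \<gamma>f(1) \<gamma>h(1) by (rule gauge_Int)
    fix D assume "D tagged_division_of {a..b} \<and> (\<lambda>x. \<gamma>f x \<inter> \<gamma>h x) fine D"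
    then have "\<bar>stieltjes_sum f G D - I\<bar> < e / 2" "\<bar>stieltjes_sum h G D - J\<bar> < e / 2"
      using \<gamma>f(2) \<gamma>h(2) by (simp_all add: fine_Int)
    then show "\<bar>stieltjes_sum (\<lambda>x. f x - h x) G D - (I - J)\<bar> < e"
      unfolding stieltjes_sum_diff by linarith
  qed
qed

lemma has_ks_integral_unique:
  fixes a b :: real
  assumes I: "has_ks_integral f G I a b" and J: "has_ks_integral f G J a b"
  shows "I = J"
proof (rule ccontr)
  assume "I \<noteq> J"
  then have e: "\<bar>I - J\<bar> / 2 > 0" by simp
  obtain \<gamma>1 where \<gamma>1: "gauge \<gamma>1"
      "\<And>D. D tagged_division_of {a..b} \<Longrightarrow> \<gamma>1 fine D \<Longrightarrow> \<bar>stieltjes_sum f G D - I\<bar> < \<bar>I - J\<bar> / 2"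
    using has_ks_integralE[OF I e] by blast
  obtain \<gamma>2 where \<gamma>2: "gauge \<gamma>2"
      "\<And>D. D tagged_division_of {a..b} \<Longrightarrow> \<gamma>2 fine D \<Longrightarrow> \<bar>stieltjes_sum f G D - J\<bar> < \<bar>I - J\<bar> / 2"
    using has_ks_integralE[OF J e] by blast
  obtain D where "D tagged_division_of {a..b}" "(\<lambda>x. \<gamma>1 x \<inter> \<gamma>2 x) fine D"
    using fine_division_exists_real[OF gauge_Int[OF \<gamma>1(1) \<gamma>2(1)]] by blast
  then have "\<bar>stieltjes_sum f G D - I\<bar> < \<bar>I - J\<bar> / 2" "\<bar>stieltjes_sum f G D - J\<bar> < \<bar>I - J\<bar> / 2"
    using \<gamma>1(2) \<gamma>2(2) by (simp_all add: fine_Int)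
  then show False by (simp add: abs_if split: if_splits)
qed

lemma ks_integral_unique: "has_ks_integral f G I a b \<Longrightarrow> ks_integral f G a b = I"
  unfolding ks_integral_def by (blast intro: the_equality has_ks_integral_unique)

lemma has_ks_integral_deviation_le:
  fixes a b c M :: real
  assumes ab: "a \<le> b" and I: "has_ks_integral f G I a b" and G: "mono_on {a..b} G"
    and M: "\<forall>t\<in>{a..b}. \<bar>c - f t\<bar> \<le> M"
  shows "\<bar>c * (G b - G a) - I\<bar> \<le> M * (G b - G a)"
proof (rule field_le_epsilon)
  fix e :: real assume e: "e > 0"
  obtain \<gamma> where \<gamma>: "gauge \<gamma>"
      "\<And>D. D tagged_division_of {a..b} \<Longrightarrow> \<gamma> fine D \<Longrightarrow> \<bar>stieltjes_sum f G D - I\<bar> < e"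
    using has_ks_integralE[OF I e] by blast
  obtain D where D: "D tagged_division_of {a..b}" "\<gamma> fine D"
    using fine_division_exists_real[OF \<gamma>(1)] by blast
  have "\<bar>stieltjes_sum (\<lambda>t. c - f t) G D\<bar> \<le> (\<Sum>(t,K)\<in>D. \<bar>(c - f t) * (G (Sup K) - G (Inf K))\<bar>)"
    unfolding stieltjes_sum_def case_prod_unfold by (rule sum_abs)
  also have "\<dots> \<le> stieltjes_sum (\<lambda>_. M) G D"
    unfolding stieltjes_sum_def
  proof (rule sum_mono, clarify)
    fix t K assume "(t,K) \<in> D"
    note tK = tagged_division_of_real_intervalD[OF D(1) this]
    then have "0 \<le> G (Sup K) - G (Inf K)" by (auto intro!: mono_onD[OF G])
    moreover have "\<bar>c - f t\<bar> \<le> M" using M tK by auto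
    ultimately show "\<bar>(c - f t) * (G (Sup K) - G (Inf K))\<bar> \<le> M * (G (Sup K) - G (Inf K))"
      by (simp add: abs_mult mult_right_mono)
  qed
  finally have "\<bar>c * (G b - G a) - stieltjes_sum f G D\<bar> \<le> M * (G b - G a)"
    unfolding stieltjes_sum_diff stieltjes_sum_const[OF D(1) ab] .
  then show "\<bar>c * (G b - G a) - I\<bar> \<le> M * (G b - G a) + e"
    using \<gamma>(2)[OF D] by (simp add: abs_if split: if_splits)
qed

section \<open>Integrability of increasing functions against continuous increasing ones\<close>

definition overlap_increment :: "(real \<Rightarrow> real) \<Rightarrow> real \<Rightarrow> real \<Rightarrow> real \<Rightarrow> real \<Rightarrow> real" where
  "overlap_increment G c d c' d' =
     (if max c c' \<le> min d d' then G (min d d') - G (max c c') else 0)"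

lemma overlap_increment_commute:
  "overlap_increment G c d c' d' = overlap_increment G c' d' c d"
  unfolding overlap_increment_def by (simp add: max.commute min.commute)

lemma sum_overlap_increment:
  fixes a b c d :: real
  assumes D: "D tagged_division_of {a..b}" and cd: "a \<le> c" "c \<le> d" "d \<le> b"
  shows "(\<Sum>(t,K)\<in>D. overlap_increment G c d (Inf K) (Sup K)) = G d - G c"
proof -
  let ?h = "\<lambda>x. G (max c (min d x))"
  have "(\<Sum>(t,K)\<in>D. overlap_increment G c d (Inf K) (Sup K))
      = (\<Sum>(t,K)\<in>D. ?h (Sup K) - ?h (Inf K))"
  proof (rule sum.cong[OF refl], clarify)
    fix t K assume "(t,K) \<in> D"
    then have "Inf K \<le> Sup K" using tagged_division_of_real_intervalD[OF D] by fastforce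
    then show "overlap_increment G c d (Inf K) (Sup K) = ?h (Sup K) - ?h (Inf K)"
      using cd unfolding overlap_increment_def by (auto simp: max_def min_def)
  qed
  also have "\<dots> = ?h b - ?h a"
    using cd by (intro additive_tagged_division_1[OF _ D]) linarith
  also have "?h b = G d" using cd by (simp add: max_def min_def)
  also have "?h a = G c" using cd by (simp add: min_absorb2 max_absorb1)
  finally show ?thesis .
qed

lemma overlap_increment_nonneg:
  assumes "mono_on {a..b} G" "a \<le> c" "c \<le> d" "d \<le> b" "a \<le> c'" "c' \<le> d'" "d' \<le> b"
  shows "0 \<le> overlap_increment G c d c' d'"
  using assms unfolding overlap_increment_def
  by (auto intro!: mono_onD[OF assms(1)] simp: max_def min_def)

text \<open>Each sum is rewritten as a double sum over the overlaps of the cells of both divisions;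
  a cell of \<open>D\<close> meets a cell of \<open>D'\<close> only if its left end lies below the other's right end.\<close>
lemma lower_stieltjes_sum_le_upper:
  fixes a b :: real
  assumes D: "D tagged_division_of {a..b}" and D': "D' tagged_division_of {a..b}"
    and u: "mono_on {a..b} u" and G: "mono_on {a..b} G"
  shows "lower_stieltjes_sum u G D \<le> upper_stieltjes_sum u G D'"
proof -
  let ?ov = "\<lambda>K K'. overlap_increment G (Inf K) (Sup K) (Inf K') (Sup K')"
  have "lower_stieltjes_sum u G D = (\<Sum>(t,K)\<in>D. \<Sum>(t',K')\<in>D'. u (Inf K) * ?ov K K')"
    unfolding lower_stieltjes_sum_def
  proof (rule sum.cong[OF refl], clarify)
    fix t K assume "(t,K) \<in> D"
    note K = tagged_division_of_real_intervalD[OF D this]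
    show "u (Inf K) * (G (Sup K) - G (Inf K)) = (\<Sum>(t',K')\<in>D'. u (Inf K) * ?ov K K')"
      using sum_overlap_increment[OF D' K(1) order_trans[OF K(2,3)] K(4), of G]
      by (simp add: sum_distrib_left[symmetric] case_prod_unfold)
  qed
  also have "\<dots> \<le> (\<Sum>(t,K)\<in>D. \<Sum>(t',K')\<in>D'. u (Sup K') * ?ov K K')"
  proof (rule sum_mono, clarify, rule sum_mono, clarify)
    fix t K t' K' assume "(t,K) \<in> D" "(t',K') \<in> D'"
    note K = tagged_division_of_real_intervalD[OF D this(1)]
      and K' = tagged_division_of_real_intervalD[OF D' this(2)]
    have nn: "0 \<le> ?ov K K'"
      using K K' by (intro overlap_increment_nonneg[OF G]) auto
    show "u (Inf K) * ?ov K K' \<le> u (Sup K') * ?ov K K'"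
    proof (cases "max (Inf K) (Inf K') \<le> min (Sup K) (Sup K')")
      case True
      then have "u (Inf K) \<le> u (Sup K')" using K K' by (intro mono_onD[OF u]) auto
      then show ?thesis using nn by (rule mult_right_mono)
    next
      case False
      then have "?ov K K' = 0" unfolding overlap_increment_def by (rule if_not_P)
      then show ?thesis by simp
    qed
  qed
  also have "\<dots> = (\<Sum>(t',K')\<in>D'. \<Sum>(t,K)\<in>D. u (Sup K') * ?ov K K')"
    unfolding case_prod_unfold by (rule sum.swap)
  also have "\<dots> = upper_stieltjes_sum u G D'"
    unfolding upper_stieltjes_sum_def
  proof (rule sum.cong[OF refl], clarify)
    fix t' K' assume "(t',K') \<in> D'"
    note K' = tagged_division_of_real_intervalD[OF D' this]
    show "(\<Sum>(t,K)\<in>D. u (Sup K') * ?ov K K') = u (Sup K') * (G (Sup K') - G (Inf K'))"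
      using sum_overlap_increment[OF D K'(1) order_trans[OF K'(2,3)] K'(4), of G]
      by (simp add: sum_distrib_left[symmetric] case_prod_unfold
          overlap_increment_commute[of G _ _ "Inf K'"])
  qed
  finally show ?thesis .
qed

lemma stieltjes_sum_between_lower_upper:
  assumes D: "D tagged_division_of {a..b}" and u: "mono_on {a..b} u" and G: "mono_on {a..b} G"
  shows "lower_stieltjes_sum u G D \<le> stieltjes_sum u G D"
    and "stieltjes_sum u G D \<le> upper_stieltjes_sum u G D"
proof -
  have "u (Inf K) * (G (Sup K) - G (Inf K)) \<le> u t * (G (Sup K) - G (Inf K))
      \<and> u t * (G (Sup K) - G (Inf K)) \<le> u (Sup K) * (G (Sup K) - G (Inf K))"
    if "(t,K) \<in> D" for t K
  proof -
    note K = tagged_division_of_real_intervalD[OF D that]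
    have "0 \<le> G (Sup K) - G (Inf K)" using K by (auto intro!: mono_onD[OF G])
    moreover have "u (Inf K) \<le> u t" "u t \<le> u (Sup K)" using K by (auto intro!: mono_onD[OF u])
    ultimately show ?thesis by (auto intro: mult_right_mono)
  qed
  then show "lower_stieltjes_sum u G D \<le> stieltjes_sum u G D"
    and "stieltjes_sum u G D \<le> upper_stieltjes_sum u G D"
    unfolding lower_stieltjes_sum_def stieltjes_sum_def upper_stieltjes_sum_def
    by (auto intro!: sum_mono)
qed

lemma upper_minus_lower_stieltjes_sum_le:
  assumes ab: "a \<le> b" and D: "D tagged_division_of {a..b}" and u: "mono_on {a..b} u"
    and small: "\<And>t K. (t,K) \<in> D \<Longrightarrow> G (Sup K) - G (Inf K) \<le> \<epsilon>"
  shows "upper_stieltjes_sum u G D - lower_stieltjes_sum u G D \<le> \<epsilon> * (u b - u a)"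
proof -
  have "upper_stieltjes_sum u G D - lower_stieltjes_sum u G D
      = (\<Sum>(t,K)\<in>D. (u (Sup K) - u (Inf K)) * (G (Sup K) - G (Inf K)))"
    unfolding upper_stieltjes_sum_def lower_stieltjes_sum_def
    by (simp add: sum_subtractf[symmetric] case_prod_unfold left_diff_distrib)
  also have "\<dots> \<le> (\<Sum>(t,K)\<in>D. (u (Sup K) - u (Inf K)) * \<epsilon>)"
  proof (rule sum_mono, clarify)
    fix t K assume tK: "(t,K) \<in> D"
    note K = tagged_division_of_real_intervalD[OF D tK]
    have "u (Inf K) \<le> u (Sup K)" using K by (intro mono_onD[OF u]) auto
    then show "(u (Sup K) - u (Inf K)) * (G (Sup K) - G (Inf K)) \<le> (u (Sup K) - u (Inf K)) * \<epsilon>"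
      using small[OF tK] by (intro mult_left_mono) auto
  qed
  also have "\<dots> = \<epsilon> * (u b - u a)"
    using additive_tagged_division_1[OF ab D, of u]
    by (simp add: sum_distrib_left[symmetric] case_prod_unfold mult.commute)
  finally show ?thesis .
qed

text \<open>The integral is the supremum of the lower sums; uniform continuity of \<open>G\<close> makes upper and
  lower sums of fine divisions close.\<close>
lemma ks_integrable_mono_on:
  fixes a b :: real and u G :: "real \<Rightarrow> real"
  assumes ab: "a \<le> b" and u: "mono_on {a..b} u" and G: "mono_on {a..b} G"
    and G_uc: "uniformly_continuous_on {a..b} G"
  shows "ks_integrable u G a b"
proof -
  define T where "T = {D. D tagged_division_of {a..b}}"
  define I where "I = Sup (lower_stieltjes_sum u G ` T)"
  have D0: "{(a,{a..b})} \<in> T"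
    unfolding T_def using ab by (intro CollectI tagged_division_of_self_real) auto
  have lower_le_upper: "lower_stieltjes_sum u G D \<le> upper_stieltjes_sum u G D'"
    if "D \<in> T" "D' \<in> T" for D D'
    using lower_stieltjes_sum_le_upper[OF _ _ u G] that unfolding T_def by auto
  have bdd: "bdd_above (lower_stieltjes_sum u G ` T)"
    using lower_le_upper D0 by (intro bdd_aboveI) auto
  have lower_le_I: "lower_stieltjes_sum u G D \<le> I" if "D \<in> T" for D
    unfolding I_def using bdd that by (intro cSup_upper) auto
  have I_le_upper: "I \<le> upper_stieltjes_sum u G D" if "D \<in> T" for D
    unfolding I_def using D0 that lower_le_upper by (intro cSup_least) auto
  have uab: "u a \<le> u b" using ab by (intro mono_onD[OF u]) auto
  have "has_ks_integral u G I a b"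
    unfolding has_ks_integral_iff
  proof (intro allI impI)
    fix e :: real assume e: "e > 0"
    define \<epsilon> where "\<epsilon> = e / (u b - u a + 1)"
    have "\<epsilon> > 0" unfolding \<epsilon>_def using e uab by simp
    then obtain \<delta> where \<delta>: "\<delta> > 0"
        "\<And>x y. x \<in> {a..b} \<Longrightarrow> y \<in> {a..b} \<Longrightarrow> dist y x < \<delta> \<Longrightarrow> dist (G y) (G x) < \<epsilon>"
      using G_uc unfolding uniformly_continuous_on_def by metis
    show "\<exists>\<gamma>. gauge \<gamma> \<and> (\<forall>D. D tagged_division_of {a..b} \<and> \<gamma> fine D \<longrightarrow>
        \<bar>stieltjes_sum u G D - I\<bar> < e)"
    proof (intro exI conjI allI impI)
      show "gauge (\<lambda>x. ball x (\<delta> / 2))" using \<delta>(1) by (intro gauge_ball) auto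
      fix D assume "D tagged_division_of {a..b} \<and> (\<lambda>x. ball x (\<delta> / 2)) fine D"
      then have D: "D tagged_division_of {a..b}" and fine: "(\<lambda>x. ball x (\<delta> / 2)) fine D" by auto
      have "G (Sup K) - G (Inf K) \<le> \<epsilon>" if tK: "(t,K) \<in> D" for t K
      proof -
        note K = tagged_division_of_real_intervalD[OF D tK]
        have "K \<subseteq> ball t (\<delta> / 2)" using fine tK unfolding fine_def by auto
        then have "\<bar>t - Inf K\<bar> < \<delta> / 2" "\<bar>t - Sup K\<bar> < \<delta> / 2"
          using K(5,6) by (auto simp: dist_real_def subset_eq)
        then have "dist (Sup K) (Inf K) < \<delta>"
          by (simp add: dist_real_def abs_if split: if_splits)
        then show ?thesis using \<delta>(2)[of "Inf K" "Sup K"] K by (auto simp: dist_real_def)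
      qed
      then have "upper_stieltjes_sum u G D - lower_stieltjes_sum u G D \<le> \<epsilon> * (u b - u a)"
        by (rule upper_minus_lower_stieltjes_sum_le[OF ab D u])
      also have "\<dots> < e" unfolding \<epsilon>_def using e uab by (simp add: field_simps)
      finally show "\<bar>stieltjes_sum u G D - I\<bar> < e"
        using stieltjes_sum_between_lower_upper[OF D u G] D lower_le_I I_le_upper
        unfolding T_def by fastforce
    qed
  qed
  then show ?thesis unfolding ks_integrable_def by blast
qed

section \<open>The continuous part of an increasing function\<close>

lemma Lim_at_right_mono_on_bounds:
  fixes g :: "real \<Rightarrow> real"
  assumes g: "mono_on {a..b} g" and x: "a \<le> x" "x < b"
  shows "g x \<le> Lim (at_right x) g" and "\<And>y. x < y \<Longrightarrow> y \<le> b \<Longrightarrow> Lim (at_right x) g \<le> g y"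
proof -
  define S where "S = g ` ({x<..} \<inter> {a..b})"
  have "(g \<longlongrightarrow> Inf S) (at x within ({x<..} \<inter> {a..b}))"
    unfolding S_def
    by (rule Lim_right_bound[where K="g x"]) (auto intro!: mono_onD[OF g] simp: x)
  moreover have "at x within ({x<..} \<inter> {a..b}) = at x within {x<..}"
    by (rule at_within_nhd[where S="{x - 1<..<b}"]) (use x in auto)
  ultimately have "(g \<longlongrightarrow> Inf S) (at_right x)" by simp
  then have L: "Lim (at_right x) g = Inf S" by (intro tendsto_Lim) auto
  have ne: "S \<noteq> {}" unfolding S_def using x by auto
  have lb: "\<And>z. z \<in> S \<Longrightarrow> g x \<le> z" unfolding S_def using x by (auto intro!: mono_onD[OF g])
  show "g x \<le> Lim (at_right x) g" unfolding L by (rule cInf_greatest[OF ne lb])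
  show "Lim (at_right x) g \<le> g y" if "x < y" "y \<le> b" for y
    unfolding L using lb that x by (intro cInf_lower) (auto simp: S_def bdd_below_def)
qed

text \<open>Jumps at points of \<open>[s,t)\<close> are separated by the values of \<open>g\<close> in between, so finitely many
  of them add up to at most \<open>g t - g s\<close>.\<close>
lemma sum_right_jump_le:
  fixes g :: "real \<Rightarrow> real"
  assumes g: "mono_on {a..b} g" and F: "finite F" "F \<subseteq> {s..<t}" and st: "a \<le> s" "s \<le> t" "t \<le> b"
  shows "sum (right_jump g) F \<le> g t - g s"
  using F st(2,3)
proof (induction F arbitrary: t rule: finite_linorder_max_induct)
  case empty
  then show ?case using st(1) by (auto intro!: mono_onD[OF g])
next
  case (insert m A)
  then have m: "s \<le> m" "m < t" and A: "A \<subseteq> {s..<m}" and "m \<notin> A" by auto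
  have "sum (right_jump g) A \<le> g m - g s" using insert.IH[OF A] m insert.prems by auto
  moreover have "right_jump g m \<le> g t - g m"
    using Lim_at_right_mono_on_bounds(2)[OF g _ _ m(2) insert.prems(3)] st(1) m insert.prems
    unfolding right_jump_def by auto
  ultimately show ?case using insert.hyps(1) \<open>m \<notin> A\<close> by simp
qed

lemma right_jump_summable_on:
  fixes g :: "real \<Rightarrow> real"
  assumes g: "mono_on {a..b} g" and st: "a \<le> s" "s \<le> t" "t \<le> b"
  shows "right_jump g summable_on {s..<t}"
proof (rule nonneg_bdd_above_summable_on)
  show "0 \<le> right_jump g x" if "x \<in> {s..<t}" for x
    using Lim_at_right_mono_on_bounds(1)[OF g, of x] that st unfolding right_jump_def by auto
  show "bdd_above (sum (right_jump g) ` {F. F \<subseteq> {s..<t} \<and> finite F})"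
    using sum_right_jump_le[OF g _ _ st] by (intro bdd_aboveI) auto
qed

lemma infsum_right_jump_le:
  fixes g :: "real \<Rightarrow> real"
  assumes g: "mono_on {a..b} g" and st: "a \<le> s" "s \<le> t" "t \<le> b"
  shows "infsum (right_jump g) {s..<t} \<le> g t - g s"
  using right_jump_summable_on[OF g st] sum_right_jump_le[OF g _ _ st]
  by (rule infsum_le_finite_sums)

lemma cont_part_mono_on:
  fixes g :: "real \<Rightarrow> real"
  assumes g: "mono_on {a..b} g"
  shows "mono_on {a..b} (cont_part g a)"
proof (rule mono_onI)
  fix s t assume st: "s \<in> {a..b}" "t \<in> {a..b}" "s \<le> t"
  have split: "{a..<t} = {a..<s} \<union> {s..<t}" using st by auto
  have "jump_part g a t = jump_part g a s + infsum (right_jump g) {s..<t}"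
    unfolding jump_part_def split
    by (rule infsum_Un_disjoint) (use right_jump_summable_on[OF g] st in auto)
  moreover have "infsum (right_jump g) {s..<t} \<le> g t - g s"
    using infsum_right_jump_le[OF g] st by auto
  ultimately show "cont_part g a s \<le> cont_part g a t" unfolding cont_part_def by simp
qed

lemma hoelder_uniformly_continuous_on:
  fixes G :: "real \<Rightarrow> real"
  assumes p: "0 < p" and hoelder: "\<forall>x\<in>S. \<forall>y\<in>S. \<bar>G x - G y\<bar> \<le> H * \<bar>x - y\<bar> powr p"
  shows "uniformly_continuous_on S G"
  unfolding uniformly_continuous_on_def
proof (intro allI impI)
  fix e :: real assume e: "e > 0"
  define C where "C = max H 1"
  define \<delta> where "\<delta> = (e / C) powr (1 / p)"
  have C: "C > 0" "H \<le> C" unfolding C_def by auto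
  have \<delta>: "\<delta> > 0" "\<delta> powr p = e / C"
    unfolding \<delta>_def using e C p by (simp_all add: powr_powr)
  show "\<exists>d>0. \<forall>x\<in>S. \<forall>x'\<in>S. dist x' x < d \<longrightarrow> dist (G x') (G x) < e"
  proof (intro exI[of _ \<delta>] conjI ballI impI)
    show "\<delta> > 0" by (rule \<delta>(1))
    fix x x' assume xx': "x \<in> S" "x' \<in> S" "dist x' x < \<delta>"
    have "\<bar>G x' - G x\<bar> \<le> H * \<bar>x' - x\<bar> powr p" using hoelder xx' by blast
    also have "\<dots> \<le> C * \<bar>x' - x\<bar> powr p" using C by (intro mult_right_mono) auto
    also have "\<dots> < C * \<delta> powr p"
      using xx'(3) p C by (intro mult_strict_left_mono powr_less_mono2) (auto simp: dist_real_def)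
    also have "\<dots> = e" using \<delta>(2) C by simp
    finally show "dist (G x') (G x) < e" by (simp add: dist_real_def)
  qed
qed

lemma mono_on_add_glipschitz:
  fixes f g :: "real \<Rightarrow> real"
  assumes g: "mono_on {a..b} g" and f: "\<forall>t\<in>{a..b}. \<forall>s\<in>{a..b}. \<bar>f t - f s\<bar> \<le> H * \<bar>g t - g s\<bar>"
  shows "mono_on {a..b} (\<lambda>x. H * g x + f x)"
proof (rule mono_onI)
  fix x y assume xy: "x \<in> {a..b}" "y \<in> {a..b}" "x \<le> y"
  have "g x \<le> g y" using xy by (rule mono_onD[OF g])
  moreover have "\<bar>f y - f x\<bar> \<le> H * \<bar>g y - g x\<bar>" using f xy by blast
  ultimately show "H * g x + f x \<le> H * g y + f y" by (simp add: abs_le_iff algebra_simps)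
qed

lemma glipschitz_deviation_le:
  fixes f g :: "real \<Rightarrow> real"
  assumes g: "mono_on {a..b} g" and f: "\<forall>t\<in>{a..b}. \<forall>s\<in>{a..b}. \<bar>f t - f s\<bar> \<le> H * \<bar>g t - g s\<bar>"
    and H: "0 \<le> H" and ab: "a \<le> b"
  shows "\<forall>t\<in>{a..b}. \<bar>f a - f t\<bar> \<le> H * (g b - g a)"
    and "\<forall>t\<in>{a..b}. \<bar>(f a + f b) / 2 - f t\<bar> \<le> H / 2 * (g b - g a)"
proof safe
  fix t assume t: "t \<in> {a..b}"
  have "g a \<le> g t" "g t \<le> g b" using t ab by (auto intro!: mono_onD[OF g])
  moreover have "\<bar>f a - f t\<bar> \<le> H * \<bar>g a - g t\<bar>" "\<bar>f b - f t\<bar> \<le> H * \<bar>g b - g t\<bar>"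
    using f t ab by auto
  ultimately have fa: "\<bar>f a - f t\<bar> \<le> H * (g t - g a)" and fb: "\<bar>f b - f t\<bar> \<le> H * (g b - g t)"
    by (simp_all add: abs_minus_commute)
  have "H * (g t - g a) \<le> H * (g b - g a)" using \<open>g t \<le> g b\<close> H by (intro mult_left_mono) auto
  with fa show "\<bar>f a - f t\<bar> \<le> H * (g b - g a)" by linarith
  have "\<bar>(f a - f t) + (f b - f t)\<bar> \<le> H * (g b - g a)"
    using abs_triangle_ineq[of "f a - f t" "f b - f t"] fa fb by (simp add: algebra_simps)
  then show "\<bar>(f a + f b) / 2 - f t\<bar> \<le> H / 2 * (g b - g a)" by (simp add: field_simps)
qed

lemma half_powr_le_powr_half:
  fixes x p :: real
  assumes "0 \<le> x" "p \<le> 1"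
  shows "x powr p / 2 \<le> (x / 2) powr p"
proof -
  have "(2::real) powr p \<le> 2 powr 1" using assms(2) by (intro powr_mono) auto
  then have "x powr p / 2 \<le> x powr p / 2 powr p" by (intro divide_left_mono) auto
  also have "\<dots> = (x / 2) powr p" using assms(1) by (simp add: powr_divide)
  finally show ?thesis .
qed

lemma hoelder_increment_mult_le:
  fixes H \<delta> \<Delta> x p :: real
  assumes H: "0 \<le> H" and \<delta>: "0 \<le> \<delta>" and \<Delta>: "\<Delta> \<le> H * x powr p" and x: "0 \<le> x" and p: "p \<le> 1"
  shows "H * \<delta> * \<Delta> \<le> H^2 * x powr p * \<delta>"
    and "H / 2 * \<delta> * \<Delta> \<le> H^2 * (x / 2) powr p * \<delta>"
proof -
  have "H * \<delta> * \<Delta> \<le> H * \<delta> * (H * x powr p)"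
    using \<Delta> H \<delta> by (intro mult_left_mono) auto
  then show "H * \<delta> * \<Delta> \<le> H^2 * x powr p * \<delta>" by (simp add: power2_eq_square algebra_simps)
  then have "H / 2 * \<delta> * \<Delta> \<le> H^2 * \<delta> * (x powr p / 2)" by (simp add: algebra_simps)
  also have "\<dots> \<le> H^2 * \<delta> * (x / 2) powr p"
    using H \<delta> x p by (intro mult_left_mono half_powr_le_powr_half) auto
  finally show "H / 2 * \<delta> * \<Delta> \<le> H^2 * (x / 2) powr p * \<delta>" by (simp add: algebra_simps)
qed

theorem mainTheorem3:
  fixes f g :: "real \<Rightarrow> real" and a b H p :: real
  assumes ab: "a < b"
    and g_mono: "mono_on {a..b} g"
    and g_leftcont: "\<forall>t\<in>{a<..b}. (g \<longlongrightarrow> g t) (at_left t)"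
    and H_pos: "H > 0" and p_pos: "0 < p" and p_le1: "p \<le> 1"
    and gC_hoelder: "\<forall>x\<in>{a..b}. \<forall>y\<in>{a..b}.
        \<bar>cont_part g a x - cont_part g a y\<bar> \<le> H * \<bar>x - y\<bar> powr p"
    and f_glip: "\<forall>t\<in>{a..b}. \<forall>s\<in>{a..b}. \<bar>f t - f s\<bar> \<le> H * \<bar>g t - g s\<bar>"
  shows "ks_integrable f (cont_part g a) a b
    \<and> \<bar>f a * (cont_part g a b - cont_part g a a) - ks_integral f (cont_part g a) a b\<bar>
        \<le> H^2 * (b - a) powr p * (g b - g a)
    \<and> \<bar>(f a + f b) / 2 * (cont_part g a b - cont_part g a a) - ks_integral f (cont_part g a) a b\<bar>
        \<le> H^2 * ((b - a) / 2) powr p * (g b - g a)"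
proof -
  let ?G = "cont_part g a"
  let ?\<Delta> = "?G b - ?G a"
  have G_mono: "mono_on {a..b} ?G" using g_mono by (rule cont_part_mono_on)
  have G_uc: "uniformly_continuous_on {a..b} ?G"
    using p_pos gC_hoelder by (rule hoelder_uniformly_continuous_on)
  have "mono_on {a..b} (\<lambda>x. H * g x)"
    using H_pos by (auto intro!: mono_onI mult_left_mono dest: mono_onD[OF g_mono])
  then have "ks_integrable (\<lambda>x. H * g x + f x) ?G a b" "ks_integrable (\<lambda>x. H * g x) ?G a b"
    using ab G_mono G_uc mono_on_add_glipschitz[OF g_mono f_glip] by (auto intro!: ks_integrable_mono_on)
  then obtain I J where "has_ks_integral (\<lambda>x. H * g x + f x) ?G I a b" "has_ks_integral (\<lambda>x. H * g x) ?G J a b"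
    unfolding ks_integrable_def by blast
  from has_ks_integral_diff[OF this] have f_int: "has_ks_integral f ?G (I - J) a b" by simp
  note dev = glipschitz_deviation_le[OF g_mono f_glip less_imp_le[OF H_pos] less_imp_le[OF ab]]
  have "0 \<le> g b - g a" using mono_onD[OF g_mono, of a b] ab by simp
  moreover have "?\<Delta> \<le> H * (b - a) powr p" using ab gC_hoelder[rule_format, of b a] by simp
  moreover have "0 \<le> b - a" using ab by simp
  ultimately have "H * (g b - g a) * ?\<Delta> \<le> H^2 * (b - a) powr p * (g b - g a)"
    and "H / 2 * (g b - g a) * ?\<Delta> \<le> H^2 * ((b - a) / 2) powr p * (g b - g a)"
    using hoelder_increment_mult_le less_imp_le[OF H_pos] p_le1 by blast+
  then show ?thesis
    using f_int has_ks_integral_deviation_le[OF less_imp_le[OF ab] f_int G_mono dev(1)]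
      has_ks_integral_deviation_le[OF less_imp_le[OF ab] f_int G_mono dev(2)]
    unfolding ks_integral_unique[OF f_int] ks_integrable_def by (blast intro: order_trans)
qed

end
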